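(* The Torricelli number is unbounded: for every $M>0$ there exists a compact convex solid $S\subset\mathbb{R}^3$ whose Torricelli number satisfies $\rho_{torr}(S)>M$.
   Context: For a compact convex solid $S$ with nonempty interior and a rotation $R$ of $\mathbb{R}^3$, let $S_R$ be the translate of $R(S)$ lying in $\{z\ge0\}$ and touching the plane $z=0$. The drainage time is $T(R)=\frac1K\iiint_{S_R} z^{-1/2}\,dV$ for a fixed constant $K>0$ (the drainage time from Torricelli's law with the orifice at the lowest point). With $T_{\max}$, $T_{\min}$ the maximum and minimum of $T(R)$ over all rotations, $\rho_{torr}(S)=T_{\max}/T_{\min}$. *)

theory Defs
  imports "HOL-Analysis.Analysis"
begin

text \<open>Coordinates of real^3 are indexed by the numeral type 3; the third (vertical, z)
  coordinate is x $ 3.\<close>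

definition convex_solid :: "(real^3) set \<Rightarrow> bool" where
  "convex_solid S \<longleftrightarrow> compact S \<and> convex S \<and> interior S \<noteq> {}"

definition rotations3 :: "(real^3^3) set" where
  "rotations3 = {R. orthogonal_matrix R \<and> det R = 1}"

definition lowest_height :: "(real^3) set \<Rightarrow> real^3^3 \<Rightarrow> real" where
  "lowest_height S R = Inf ((\<lambda>x. (R *v x) $ 3) ` S)"

definition placed :: "(real^3) set \<Rightarrow> real^3^3 \<Rightarrow> (real^3) set" where
  "placed S R = (\<lambda>x. R *v x - lowest_height S R *\<^sub>R axis 3 1) ` S"

definition drain_time :: "real \<Rightarrow> (real^3) set \<Rightarrow> real^3^3 \<Rightarrow> real" where
  "drain_time K S R = integral (placed S R) (\<lambda>x. (x $ 3) powr (-1/2)) / K"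

definition rho_torr :: "real \<Rightarrow> (real^3) set \<Rightarrow> real" where
  "rho_torr K S = (SUP R\<in>rotations3. drain_time K S R) / (INF R\<in>rotations3. drain_time K S R)"

end

theory Submission
  imports Defs
begin

text \<open>Take the square column [0,1] x [0,1] x [0,L]. Standing upright, its drainage integral is
  at most 2 sqrt L: the substitution z = t^2 has Jacobian 2t, which cancels the singularity of
  z^(-1/2). Lying on a long face, every point is at height at most 1, so the integral is at
  least the volume L. Every placement of a compact solid of positive volume lies in a fixed box
  and has the same volume, so all drainage times are bounded above and below by positive
  constants; hence T_max / T_min >= L / (2 sqrt L) = sqrt L / 2, which is unbounded.\<close>

abbreviation inv_sqrt_height :: "real^3 \<Rightarrow> real" where
  "inv_sqrt_height \<equiv> \<lambda>x. (x $ 3) powr (-1/2)"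

lemma powr_minus_half: "0 < (y::real) \<Longrightarrow> y powr - (1/2) = 1 / sqrt y"
  by (simp add: powr_minus_divide powr_half_sqrt)

lemma prod_3: "prod f (UNIV::3 set) = f 1 * f 2 * f 3"
  unfolding UNIV_3 by (simp add: ac_simps)

definition square_height :: "real^3 \<Rightarrow> real^3" where
  "square_height x = x + ((x $ 3)\<^sup>2 - x $ 3) *\<^sub>R axis 3 1"

lemma square_height_component: "square_height x $ i = (if i = 3 then (x $ 3)\<^sup>2 else x $ i)"
  by (simp add: square_height_def axis_def)

lemma has_derivative_square_height:
  fixes x :: "real^3"
  shows "(square_height has_derivative (\<lambda>h. h + (2 * x $ 3 * h $ 3 - h $ 3) *\<^sub>R axis 3 1))
    (at x within T)"
  unfolding square_height_def
  by (rule derivative_eq_intros refl bounded_linear.has_derivative[OF bounded_linear_vec_nth] | simp)+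
     (auto simp: fun_eq_iff algebra_simps)

lemma det_derivative_square_height:
  fixes x :: "real^3"
  shows "det (matrix (\<lambda>h::real^3. h + (2 * x $ 3 * h $ 3 - h $ 3) *\<^sub>R axis 3 1)) = 2 * x $ 3"
  by (simp add: det_3 matrix_def axis_def)

lemma square_height_image_cbox:
  assumes "lo $ 3 = 0" and "0 \<le> hi $ 3"
  shows "square_height ` cbox lo (\<chi> i. if i = 3 then sqrt (hi $ 3) else hi $ i) = cbox lo hi"
proof
  show "square_height ` cbox lo (\<chi> i. if i = 3 then sqrt (hi $ 3) else hi $ i) \<subseteq> cbox lo hi"
  proof
    fix y assume "y \<in> square_height ` cbox lo (\<chi> i. if i = 3 then sqrt (hi $ 3) else hi $ i)"
    then obtain x
      where x: "\<forall>i. lo $ i \<le> x $ i \<and> x $ i \<le> (if i = 3 then sqrt (hi $ 3) else hi $ i)"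
      and y: "y = square_height x"
      by (auto simp: mem_box_cart)
    have "(x $ 3)\<^sup>2 \<le> hi $ 3"
      using power_mono[of "x $ 3" "sqrt (hi $ 3)" 2] x[rule_format, of 3] assms by simp
    then have "lo $ i \<le> y $ i \<and> y $ i \<le> hi $ i" for i
      using x[rule_format, of i] assms(1) by (cases "i = 3") (auto simp: y square_height_component)
    then show "y \<in> cbox lo hi"
      by (simp add: mem_box_cart)
  qed
  show "cbox lo hi \<subseteq> square_height ` cbox lo (\<chi> i. if i = 3 then sqrt (hi $ 3) else hi $ i)"
  proof
    fix y assume y: "y \<in> cbox lo hi"
    define x :: "real^3" where "x = (\<chi> i. if i = 3 then sqrt (y $ 3) else y $ i)"
    have "0 \<le> y $ 3" "y $ 3 \<le> hi $ 3"
      using y assms(1) by (auto simp: mem_box_cart dest: spec[of _ 3])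
    then have "square_height x = y \<and> x \<in> cbox lo (\<chi> i. if i = 3 then sqrt (hi $ 3) else hi $ i)"
      using y assms(1) by (auto simp: vec_eq_iff square_height_component x_def mem_box_cart)
    then show "y \<in> square_height ` cbox lo (\<chi> i. if i = 3 then sqrt (hi $ 3) else hi $ i)"
      by blast
  qed
qed

lemma inv_sqrt_height_cbox_bound:
  fixes lo hi :: "real^3"
  assumes lo3: "lo $ 3 = 0" and lo_hi: "\<And>i. lo $ i \<le> hi $ i"
  shows "inv_sqrt_height integrable_on cbox lo hi"
    and "integral (cbox lo hi) inv_sqrt_height \<le> 2 * (hi $ 1 - lo $ 1) * (hi $ 2 - lo $ 2) * sqrt (hi $ 3)"
proof -
  define T where "T = cbox lo (\<chi> i. if i = 3 then sqrt (hi $ 3) else hi $ i)"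
  define g' where "g' = (\<lambda>(x::real^3) (h::real^3). h + (2 * x $ 3 * h $ 3 - h $ 3) *\<^sub>R axis 3 1)"
  have hi3: "0 \<le> hi $ 3"
    using lo_hi[of 3] lo3 by simp
  have T_nonneg: "0 \<le> x $ 3" if "x \<in> T" for x
    using that lo3 by (auto simp: T_def mem_box_cart dest: spec[of _ 3])
  have jacobian: "\<bar>det (matrix (g' x))\<bar> * inv_sqrt_height (square_height x) = 2"
    if "x \<in> T - {x. x $ 3 = 0}" for x
  proof -
    have "0 < x $ 3"
      using that T_nonneg[of x] by auto
    then show ?thesis
      by (simp add: g'_def det_derivative_square_height square_height_component powr_minus_half)
  qed
  have transformed: "((\<lambda>x. \<bar>det (matrix (g' x))\<bar> * inv_sqrt_height (square_height x)) has_integral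
          measure lborel T *\<^sub>R 2) T"
    unfolding T_def
    by (rule has_integral_spike[OF negligible_standard_hyperplane_cart[of 3] _ has_integral_const])
       (use jacobian in \<open>simp add: T_def\<close>)
  have "square_height ` T = cbox lo hi"
    unfolding T_def using lo3 hi3 by (rule square_height_image_cbox)
  then have bound: "inv_sqrt_height integrable_on cbox lo hi \<and>
      integral (cbox lo hi) inv_sqrt_height
        \<le> integral T (\<lambda>x. \<bar>det (matrix (g' x))\<bar> * inv_sqrt_height (square_height x))"
    using has_integral_integrable[OF transformed]
      integral_on_image_ubound_nonneg[of T inv_sqrt_height square_height g']
    by (simp add: g'_def has_derivative_square_height)
  have "lo $ i \<le> (if i = 3 then sqrt (hi $ 3) else hi $ i)" for i
    using lo_hi[of i] lo3 hi3 by simp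
  then have "lo \<in> T"
    by (simp add: T_def mem_box_cart)
  then have "measure lborel T = (hi $ 1 - lo $ 1) * (hi $ 2 - lo $ 2) * sqrt (hi $ 3)"
    unfolding T_def by (subst content_cbox_cart) (blast, simp add: prod_3 lo3)
  with integral_unique[OF transformed]
  have "integral T (\<lambda>x. \<bar>det (matrix (g' x))\<bar> * inv_sqrt_height (square_height x))
      = 2 * (hi $ 1 - lo $ 1) * (hi $ 2 - lo $ 2) * sqrt (hi $ 3)"
    by simp
  with bound show "inv_sqrt_height integrable_on cbox lo hi"
    and "integral (cbox lo hi) inv_sqrt_height \<le> 2 * (hi $ 1 - lo $ 1) * (hi $ 2 - lo $ 2) * sqrt (hi $ 3)"
    by simp_all
qed

lemma inv_sqrt_height_integrable_bound:
  fixes lo hi :: "real^3"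
  assumes A: "A \<in> sets lebesgue" "A \<subseteq> cbox lo hi"
    and lo3: "lo $ 3 = 0" and lo_hi: "\<And>i. lo $ i \<le> hi $ i"
  shows "inv_sqrt_height integrable_on A"
    and "integral A inv_sqrt_height \<le> 2 * (hi $ 1 - lo $ 1) * (hi $ 2 - lo $ 2) * sqrt (hi $ 3)"
proof -
  note box = inv_sqrt_height_cbox_bound[OF lo3 lo_hi]
  have "inv_sqrt_height absolutely_integrable_on cbox lo hi"
    using box(1) by (rule nonnegative_absolutely_integrable_1) simp
  then have "inv_sqrt_height absolutely_integrable_on A"
    using A by (rule set_integrable_subset)
  then show integrable: "inv_sqrt_height integrable_on A"
    by (rule set_lebesgue_integral_eq_integral(1))
  have "integral A inv_sqrt_height \<le> integral (cbox lo hi) inv_sqrt_height"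
    using A(2) integrable box(1) by (rule integral_subset_le) simp
  with box(2)
  show "integral A inv_sqrt_height \<le> 2 * (hi $ 1 - lo $ 1) * (hi $ 2 - lo $ 2) * sqrt (hi $ 3)"
    by linarith
qed

lemma measure_div_sqrt_le_integral_inv_sqrt_height:
  assumes A: "A \<in> lmeasurable" "inv_sqrt_height integrable_on A"
    and heights: "\<And>x. x \<in> A \<Longrightarrow> 0 \<le> x $ 3 \<and> x $ 3 \<le> h"
  shows "measure lebesgue A / sqrt h \<le> integral A inv_sqrt_height"
proof (cases "0 < h")
  case False
  then have "measure lebesgue A / sqrt h \<le> 0"
    by (simp add: divide_nonneg_nonpos)
  also have "0 \<le> integral A inv_sqrt_height"
    using A(2) by (rule integral_nonneg) simp
  finally show ?thesis .
next
  case True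
  define c where "c = 1 / sqrt h"
  \<comment> \<open>on the negligible plane z = 0 the integrand is 0 (as 0 powr a = 0), not large\<close>
  define f where "f = (\<lambda>x::real^3. if x $ 3 = 0 then c else inv_sqrt_height x)"
  have f_spike: "f x = inv_sqrt_height x" if "x \<in> A - {x. x $ 3 = 0}" for x
    using that by (simp add: f_def)
  have "measure lebesgue A / sqrt h = integral A (\<lambda>x. c)"
    using A(1) by (simp add: lmeasure_integral c_def)
  also have "\<dots> \<le> integral A f"
  proof (rule integral_le)
    show "(\<lambda>x. c) integrable_on A"
      using A(1) by (rule integrable_on_const)
    show "f integrable_on A"
      using A(2) negligible_standard_hyperplane_cart f_spike by (rule integrable_spike)
    fix x assume "x \<in> A"
    with heights[of x] True show "c \<le> f x"
      by (auto simp: f_def c_def powr_minus_half intro: divide_left_mono)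
  qed
  also have "\<dots> = integral A inv_sqrt_height"
    by (rule integral_spike[OF negligible_standard_hyperplane_cart[of 3]]) (simp add: f_spike)
  finally show ?thesis .
qed

lemma placed_eq_translated_image:
  "placed S R = (\<lambda>y. y - lowest_height S R *\<^sub>R axis 3 1) ` (\<lambda>x. R *v x) ` S"
  by (simp add: placed_def image_image)

lemma
  assumes "orthogonal_matrix R" and "S \<in> lmeasurable"
  shows lmeasurable_placed: "placed S R \<in> lmeasurable"
    and measure_placed: "measure lebesgue (placed S R) = measure lebesgue S"
proof -
  have "orthogonal_transformation (\<lambda>x. R *v x)"
    using assms(1) by (simp add: orthogonal_transformation_matrix)
  then have "(\<lambda>x. R *v x) ` S \<in> lmeasurable"
    and "measure lebesgue ((\<lambda>x. R *v x) ` S) = measure lebesgue S"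
    using assms(2) by (simp_all add: measurable_orthogonal_image measure_orthogonal_image)
  then show "placed S R \<in> lmeasurable" and "measure lebesgue (placed S R) = measure lebesgue S"
    unfolding placed_eq_translated_image
    using measurable_translation[of _ "- lowest_height S R *\<^sub>R axis 3 1"]
    by (simp_all add: measure_translation_subtract)
qed

lemma lowest_height_le:
  "bdd_below ((\<lambda>x. (R *v x) $ 3) ` S) \<Longrightarrow> x \<in> S \<Longrightarrow> lowest_height S R \<le> (R *v x) $ 3"
  unfolding lowest_height_def by (rule cInf_lower) auto

lemma lowest_height_ge:
  "S \<noteq> {} \<Longrightarrow> (\<And>x. x \<in> S \<Longrightarrow> c \<le> (R *v x) $ 3) \<Longrightarrow> c \<le> lowest_height S R"
  unfolding lowest_height_def by (rule cInf_greatest) auto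

lemma placed_subset_cbox:
  assumes R: "orthogonal_matrix R" and S: "S \<noteq> {}" "\<And>x. x \<in> S \<Longrightarrow> norm x \<le> D"
  shows "placed S R \<subseteq> cbox (\<chi> i. if i = 3 then 0 else - D) (\<chi> i. if i = 3 then 2 * D else D)"
proof
  have component_bound: "\<bar>(R *v x) $ i\<bar> \<le> D" if "x \<in> S" for x i
    using component_le_norm_cart[of "R *v x" i] S(2)[OF that]
      orthogonal_transformation_norm[of "\<lambda>x. R *v x"] R
    by (simp add: orthogonal_transformation_matrix)
  have height_bound: "- D \<le> (R *v x) $ 3" if "x \<in> S" for x
    using component_bound[OF that, of 3] by (simp add: abs_le_iff)
  then have lowest_bounds: "- D \<le> lowest_height S R" "lowest_height S R \<le> (R *v x) $ 3"
    if "x \<in> S" for x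
    using that S(1) by (auto intro!: lowest_height_ge lowest_height_le bdd_belowI2)
  fix y assume "y \<in> placed S R"
  then obtain x where x: "x \<in> S" and y: "y = R *v x - lowest_height S R *\<^sub>R axis 3 1"
    unfolding placed_def by blast
  have "(if i = 3 then 0 else - D) \<le> y $ i \<and> y $ i \<le> (if i = 3 then 2 * D else D)" for i
    using component_bound[OF x, of i] component_bound[OF x, of 3] lowest_bounds[OF x]
    by (cases "i = 3") (auto simp: y axis_def abs_le_iff)
  then show "y \<in> cbox (\<chi> i. if i = 3 then 0 else - D) (\<chi> i. if i = 3 then 2 * D else D)"
    by (simp add: mem_box_cart)
qed

lemma drain_time_uniform_bounds:
  assumes K: "0 < K" and S: "compact S" "0 < measure lebesgue S"
  obtains a b where "0 < a"
    and "\<And>R. R \<in> rotations3 \<Longrightarrow> a \<le> drain_time K S R \<and> drain_time K S R \<le> b"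
proof -
  obtain D where D: "0 < D" "\<And>x. x \<in> S \<Longrightarrow> norm x \<le> D"
    using compact_imp_bounded[OF S(1)] by (auto simp: bounded_pos)
  have "S \<noteq> {}"
    using S(2) by auto
  have lmS: "S \<in> lmeasurable"
    using S(1) by (rule lmeasurable_compact)
  define lo :: "real^3" where "lo = (\<chi> i. if i = 3 then 0 else - D)"
  define hi :: "real^3" where "hi = (\<chi> i. if i = 3 then 2 * D else D)"
  have integral_bounds: "measure lebesgue S / sqrt (2 * D) \<le> integral (placed S R) inv_sqrt_height
      \<and> integral (placed S R) inv_sqrt_height \<le> 2 * (2 * D) * (2 * D) * sqrt (2 * D)"
    if R: "orthogonal_matrix R" for R
  proof -
    have sub: "placed S R \<subseteq> cbox lo hi"
      unfolding lo_def hi_def using R \<open>S \<noteq> {}\<close> D(2) by (rule placed_subset_cbox)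
    have lm: "placed S R \<in> lmeasurable"
      using R lmS by (rule lmeasurable_placed)
    have lo_hi: "lo $ 3 = 0" "lo $ i \<le> hi $ i" for i
      using D(1) by (simp_all add: lo_def hi_def)
    note upper = inv_sqrt_height_integrable_bound[OF fmeasurableD[OF lm] sub lo_hi]
    have "0 \<le> x $ 3 \<and> x $ 3 \<le> 2 * D" if "x \<in> placed S R" for x
      using subsetD[OF sub that] by (auto simp: mem_box_cart lo_def hi_def dest: spec[of _ 3])
    with lm upper(1)
    have "measure lebesgue (placed S R) / sqrt (2 * D) \<le> integral (placed S R) inv_sqrt_height"
      by (rule measure_div_sqrt_le_integral_inv_sqrt_height)
    with upper(2) show ?thesis
      by (simp add: measure_placed[OF R lmS] lo_def hi_def)
  qed
  show thesis
  proof (rule that[of "measure lebesgue S / sqrt (2 * D) / K"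
        "2 * (2 * D) * (2 * D) * sqrt (2 * D) / K"])
    show "0 < measure lebesgue S / sqrt (2 * D) / K"
      using S(2) D(1) K by simp
    fix R assume "R \<in> rotations3"
    then have "orthogonal_matrix R"
      by (simp add: rotations3_def)
    with integral_bounds K show "measure lebesgue S / sqrt (2 * D) / K \<le> drain_time K S R \<and>
        drain_time K S R \<le> 2 * (2 * D) * (2 * D) * sqrt (2 * D) / K"
      unfolding drain_time_def by (intro conjI divide_right_mono) auto
  qed
qed

lemma drain_time_pos:
  assumes "0 < K" "compact S" "0 < measure lebesgue S" "R \<in> rotations3"
  shows "0 < drain_time K S R"
  using drain_time_uniform_bounds[OF assms(1-3)] assms(4) by (metis order.strict_trans2)

lemma drain_time_ratio_le_rho_torr:
  assumes K: "0 < K" and S: "compact S" "0 < measure lebesgue S"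
    and R: "R1 \<in> rotations3" "R2 \<in> rotations3"
  shows "drain_time K S R1 / drain_time K S R2 \<le> rho_torr K S"
proof -
  obtain a b where a: "0 < a"
    and bounds: "\<And>R. R \<in> rotations3 \<Longrightarrow> a \<le> drain_time K S R \<and> drain_time K S R \<le> b"
    using drain_time_uniform_bounds[OF K S] by blast
  have "bdd_above (drain_time K S ` rotations3)"
    using bounds by (intro bdd_aboveI2[where M = b]) blast
  moreover have "bdd_below (drain_time K S ` rotations3)"
    using bounds by (intro bdd_belowI2[where m = a]) blast
  ultimately have "drain_time K S R1 \<le> (SUP R\<in>rotations3. drain_time K S R)"
    and "(INF R\<in>rotations3. drain_time K S R) \<le> drain_time K S R2"
    using R by (simp_all add: cSUP_upper cINF_lower)
  moreover have "a \<le> (INF R\<in>rotations3. drain_time K S R)"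
    using R(2) bounds by (auto intro: cINF_greatest)
  ultimately show ?thesis
    unfolding rho_torr_def using a drain_time_pos[OF K S R(1)]
    by (intro frac_le) auto
qed

definition square_column :: "real \<Rightarrow> (real^3) set" where
  "square_column L = cbox 0 (\<chi> i. if i = 3 then L else 1)"

definition cyclic_rotation :: "real^3^3" where
  "cyclic_rotation =
    (\<chi> i j. if (i = 1 \<and> j = 3) \<or> (i = 2 \<and> j = 1) \<or> (i = 3 \<and> j = 2) then 1 else 0)"

lemma cyclic_rotation_mult:
  "cyclic_rotation *v x = (\<chi> i. if i = 1 then x $ 3 else if i = 2 then x $ 1 else x $ 2)"
  by (simp add: vec_eq_iff forall_3 matrix_vector_mult_def sum_3 cyclic_rotation_def)

lemma cyclic_rotation_in_rotations3: "cyclic_rotation \<in> rotations3"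
proof -
  have "transpose cyclic_rotation ** cyclic_rotation = mat 1"
    by (simp add: vec_eq_iff forall_3 matrix_matrix_mult_def sum_3 cyclic_rotation_def
        transpose_def mat_def)
  moreover have "det cyclic_rotation = 1"
    by (simp add: det_3 cyclic_rotation_def)
  ultimately show ?thesis
    by (simp add: rotations3_def orthogonal_matrix)
qed

lemma mat_1_in_rotations3: "mat 1 \<in> rotations3"
  by (simp add: rotations3_def orthogonal_matrix_id)

lemma placed_eq_image:
  assumes "0 \<in> S" and "\<And>x. x \<in> S \<Longrightarrow> 0 \<le> (R *v x) $ 3"
  shows "placed S R = (\<lambda>x. R *v x) ` S"
proof -
  have "lowest_height S R \<le> (R *v 0) $ 3"
    using assms by (intro lowest_height_le bdd_belowI2) auto
  moreover have "0 \<le> lowest_height S R"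
    using assms by (intro lowest_height_ge) auto
  ultimately show ?thesis
    by (simp add: placed_def)
qed

lemma mem_square_column:
  "x \<in> square_column L \<longleftrightarrow> (\<forall>i. 0 \<le> x $ i) \<and> x $ 1 \<le> 1 \<and> x $ 2 \<le> 1 \<and> x $ 3 \<le> L"
  by (auto simp: square_column_def mem_box_cart forall_3)

lemma
  assumes "0 \<le> L"
  shows compact_square_column: "compact (square_column L)"
    and measure_square_column: "measure lebesgue (square_column L) = L"
proof -
  show "compact (square_column L)"
    by (simp add: square_column_def)
  have "cbox (0::real^3) (\<chi> i. if i = 3 then L else 1) \<noteq> {}"
    using assms by (simp add: interval_ne_empty_cart forall_3)
  then show "measure lebesgue (square_column L) = L"
    by (simp add: square_column_def content_cbox_cart prod_3)
qed

lemma convex_solid_square_column: "0 < L \<Longrightarrow> convex_solid (square_column L)"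
  unfolding convex_solid_def square_column_def
  by (simp add: interval_ne_empty_cart forall_3)

lemma drain_time_upright_square_column:
  assumes "0 < K" and "0 \<le> L"
  shows "drain_time K (square_column L) (mat 1) \<le> 2 * sqrt L / K"
proof -
  have "placed (square_column L) (mat 1) = square_column L"
    using assms(2) by (subst placed_eq_image) (auto simp: mem_square_column)
  moreover have "integral (square_column L) inv_sqrt_height \<le> 2 * sqrt L"
    using inv_sqrt_height_cbox_bound(2)[of 0 "\<chi> i. if i = 3 then L else 1"] assms(2)
    by (simp add: square_column_def)
  ultimately show ?thesis
    using assms(1) by (simp add: drain_time_def divide_right_mono)
qed

lemma drain_time_lying_square_column:
  assumes "0 < K" and "0 \<le> L"
  shows "L / K \<le> drain_time K (square_column L) cyclic_rotation"
proof -
  let ?P = "placed (square_column L) cyclic_rotation"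
  have P: "?P = (\<lambda>x. cyclic_rotation *v x) ` square_column L"
    using assms(2) by (subst placed_eq_image) (auto simp: mem_square_column cyclic_rotation_mult)
  then have sub: "?P \<subseteq> cbox 0 (\<chi> i. if i = 1 then L else 1)"
    by (auto simp: mem_square_column cyclic_rotation_mult mem_box_cart forall_3)
  have orth: "orthogonal_matrix cyclic_rotation"
    using cyclic_rotation_in_rotations3 by (simp add: rotations3_def)
  have lm: "?P \<in> lmeasurable"
    using orth lmeasurable_compact[OF compact_square_column[OF assms(2)]] by (rule lmeasurable_placed)
  have "inv_sqrt_height integrable_on ?P"
    using fmeasurableD[OF lm] sub
    by (rule inv_sqrt_height_integrable_bound(1)) (simp_all add: assms(2))
  moreover have "0 \<le> x $ 3 \<and> x $ 3 \<le> 1" if "x \<in> ?P" for x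
    using that unfolding P by (auto simp: mem_square_column cyclic_rotation_mult)
  ultimately have "measure lebesgue ?P / sqrt 1 \<le> integral ?P inv_sqrt_height"
    using lm by (intro measure_div_sqrt_le_integral_inv_sqrt_height)
  moreover have "measure lebesgue ?P = L"
    using measure_placed[OF orth lmeasurable_compact[OF compact_square_column[OF assms(2)]]]
      measure_square_column[OF assms(2)] by simp
  ultimately show ?thesis
    using assms(1) by (simp add: drain_time_def divide_right_mono)
qed

lemma rho_torr_square_column_ge:
  assumes K: "0 < K" and L: "0 < L"
  shows "sqrt L / 2 \<le> rho_torr K (square_column L)"
proof -
  let ?S = "square_column L"
  have S: "compact ?S" "0 < measure lebesgue ?S"
    using L by (simp_all add: compact_square_column measure_square_column)
  have "sqrt L / 2 = (L / K) / (2 * sqrt L / K)"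
    using K L by (simp add: field_simps)
  also have "\<dots> \<le> drain_time K ?S cyclic_rotation / drain_time K ?S (mat 1)"
  proof (rule frac_le)
    have "0 \<le> L / K"
      using K L by simp
    also show "L / K \<le> drain_time K ?S cyclic_rotation"
      using K L by (simp add: drain_time_lying_square_column)
    finally show "0 \<le> drain_time K ?S cyclic_rotation" .
    show "0 < drain_time K ?S (mat 1)"
      using K S mat_1_in_rotations3 by (rule drain_time_pos)
    show "drain_time K ?S (mat 1) \<le> 2 * sqrt L / K"
      using K L by (simp add: drain_time_upright_square_column)
  qed
  also have "\<dots> \<le> rho_torr K ?S"
    using K S cyclic_rotation_in_rotations3 mat_1_in_rotations3
    by (rule drain_time_ratio_le_rho_torr)
  finally show ?thesis .
qed

theorem corollary2:
  fixes K M :: real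
  assumes "K > 0" and "M > 0"
  shows "\<exists>S. convex_solid S \<and> rho_torr K S > M"
proof -
  define L where "L = (2 * M + 2)\<^sup>2"
  have L: "0 < L" "sqrt L / 2 = M + 1"
    using assms(2) by (simp_all add: L_def)
  have "M < sqrt L / 2"
    using L(2) by simp
  also have "\<dots> \<le> rho_torr K (square_column L)"
    using assms(1) L(1) by (rule rho_torr_square_column_ge)
  finally show ?thesis
    using convex_solid_square_column[OF L(1)] by blast
qed

end
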